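(* Let an SSSCG have weakly monotonic cost functions with identical leader and follower costs, $c_{i,\ell}=c_{i,f}=:c_i$ for all $i\in R$. Let $(\sigma_\ell,\nu)$ be an OSE or a PSE in which $\sigma_\ell$ is pure, selecting resource $i^\star$. Then this profile is a pure Nash equilibrium of the (simultaneous) singleton congestion game with players $F\cup\{\ell\}$ and costs $c_i$: i.e., for all $i\ne i^\star$ with $\nu_i>0$ and all $j\ne i$, $c_i(\nu_i+[i=i^\star])\le c_j(\nu_j+[j=i^\star]+1)$, the same holding for $i=i^\star$ with $\nu_{i^\star}>0$, namely $c_{i^\star}(\nu_{i^\star}+1)\le c_j(\nu_j+1)$ for $j\ne i^\star$; and the leader has no profitable unilateral deviation: $c_{i^\star}(\nu_{i^\star}+1)\le c_j(\nu_j+1)$ for all $j\ne i^\star$.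
   Context: A symmetric Stackelberg singleton congestion game (SSSCG) consists of a leader $\ell$, a finite set $F$ of followers, a finite set $R$ of resources which every player may select (each player selects exactly one), and cost functions $c_{i,\ell},c_{i,f}:\mathbb N\to\mathbb Q$ ($i\in R$) for the leader and the followers with $c_{i,\ell}(0)=c_{i,f}(0)=0$. The leader commits to a probability distribution $\sigma_\ell$ on $R$ (pure if it puts probability $1$ on one resource). A followers' configuration is $\nu\in\mathbb N^R$ with $\sum_i\nu_i=|F|$. The followers' expected cost of resource $i$ with $x$ followers is $c^{\sigma_\ell}_{i,f}(x)=\sigma_\ell(i)c_{i,f}(x+1)+(1-\sigma_\ell(i))c_{i,f}(x)$; the leader's cost is $c_\ell^{(\sigma_\ell,\nu)}=\sum_{i\in R}\sigma_\ell(i)c_{i,\ell}(\nu_i+1)$. $\nu$ is a Nash equilibrium for $\sigma_\ell$ ($\nu\in E^{\sigma_\ell}$) if for all $i$ with $\nu_i>0$ and all $j\ne i$, $c^{\sigma_\ell}_{i,f}(\nu_i)\le c^{\sigma_\ell}_{j,f}(\nu_j+1)$. An OSE is a pair $(\sigma_\ell,\nu)$ with $\nu\in E^{\sigma_\ell}$ minimizing $c_\ell^{(\sigma_\ell,\nu)}$ over all such pairs. A PSE is a pair $(\sigma_\ell,\nu)$ such that $\sigma_\ell$ attains the minimum over all leader strategies of $\max_{\nu'\in E^{\sigma_\ell}}c_\ell^{(\sigma_\ell,\nu')}$ and $\nu\in E^{\sigma_\ell}$ attains that maximum. $[P]$ denotes $1$ if $P$ holds and $0$ otherwise. Weakly monotonic: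 $c_i(x)\le c_i(x+1)$ for all $i,x$. *)

theory Defs
  imports Complex_Main
begin

text \<open>Symmetric Stackelberg singleton congestion game: finite resource set R (of type 'r),
  n = |F| followers (only the number of followers matters), leader costs cl and follower
  costs cf, both of type 'r \<Rightarrow> nat \<Rightarrow> rat.\<close>

definition leader_strategy :: "'r set \<Rightarrow> ('r \<Rightarrow> real) \<Rightarrow> bool" where
  "leader_strategy R \<sigma> \<longleftrightarrow>
     (\<forall>i. 0 \<le> \<sigma> i) \<and> (\<forall>i. i \<notin> R \<longrightarrow> \<sigma> i = 0) \<and> (\<Sum>i\<in>R. \<sigma> i) = 1"

definition pure_strategy :: "'r \<Rightarrow> 'r \<Rightarrow> real" where
  "pure_strategy i\<^sub>0 = (\<lambda>i. if i = i\<^sub>0 then 1 else 0)"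

definition followers_config :: "'r set \<Rightarrow> nat \<Rightarrow> ('r \<Rightarrow> nat) \<Rightarrow> bool" where
  "followers_config R n \<nu> \<longleftrightarrow> (\<forall>i. i \<notin> R \<longrightarrow> \<nu> i = 0) \<and> (\<Sum>i\<in>R. \<nu> i) = n"

definition exp_follower_cost ::
  "('r \<Rightarrow> nat \<Rightarrow> rat) \<Rightarrow> ('r \<Rightarrow> real) \<Rightarrow> 'r \<Rightarrow> nat \<Rightarrow> real" where
  "exp_follower_cost cf \<sigma> i x =
     \<sigma> i * real_of_rat (cf i (x + 1)) + (1 - \<sigma> i) * real_of_rat (cf i x)"

definition leader_cost ::
  "'r set \<Rightarrow> ('r \<Rightarrow> nat \<Rightarrow> rat) \<Rightarrow> ('r \<Rightarrow> real) \<Rightarrow> ('r \<Rightarrow> nat) \<Rightarrow> real" where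
  "leader_cost R cl \<sigma> \<nu> = (\<Sum>i\<in>R. \<sigma> i * real_of_rat (cl i (\<nu> i + 1)))"

text \<open>\<nu> \<in> E^\<sigma>\<close>
definition follower_NE ::
  "'r set \<Rightarrow> nat \<Rightarrow> ('r \<Rightarrow> nat \<Rightarrow> rat) \<Rightarrow> ('r \<Rightarrow> real) \<Rightarrow> ('r \<Rightarrow> nat) \<Rightarrow> bool" where
  "follower_NE R n cf \<sigma> \<nu> \<longleftrightarrow> followers_config R n \<nu> \<and>
     (\<forall>i\<in>R. 0 < \<nu> i \<longrightarrow> (\<forall>j\<in>R. j \<noteq> i \<longrightarrow>
        exp_follower_cost cf \<sigma> i (\<nu> i) \<le> exp_follower_cost cf \<sigma> j (\<nu> j + 1)))"

definition OSE ::
  "'r set \<Rightarrow> nat \<Rightarrow> ('r \<Rightarrow> nat \<Rightarrow> rat) \<Rightarrow> ('r \<Rightarrow> nat \<Rightarrow> rat) \<Rightarrow> ('r \<Rightarrow> real) \<Rightarrow> ('r \<Rightarrow> nat) \<Rightarrow> bool" where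
  "OSE R n cl cf \<sigma> \<nu> \<longleftrightarrow> leader_strategy R \<sigma> \<and> follower_NE R n cf \<sigma> \<nu> \<and>
     (\<forall>\<sigma>' \<nu>'. leader_strategy R \<sigma>' \<and> follower_NE R n cf \<sigma>' \<nu>' \<longrightarrow>
        leader_cost R cl \<sigma> \<nu> \<le> leader_cost R cl \<sigma>' \<nu>')"

text \<open>PSE: \<nu> attains max over E^\<sigma> of the leader's cost, and this value is at most
  max over E^\<sigma>' for every leader strategy \<sigma>' (maxima are over finite sets, and E^\<sigma>' is
  nonempty, so "\<le> max" is "\<le> some element").\<close>
definition PSE ::
  "'r set \<Rightarrow> nat \<Rightarrow> ('r \<Rightarrow> nat \<Rightarrow> rat) \<Rightarrow> ('r \<Rightarrow> nat \<Rightarrow> rat) \<Rightarrow> ('r \<Rightarrow> real) \<Rightarrow> ('r \<Rightarrow> nat) \<Rightarrow> bool" where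
  "PSE R n cl cf \<sigma> \<nu> \<longleftrightarrow> leader_strategy R \<sigma> \<and> follower_NE R n cf \<sigma> \<nu> \<and>
     (\<forall>\<nu>'. follower_NE R n cf \<sigma> \<nu>' \<longrightarrow> leader_cost R cl \<sigma> \<nu>' \<le> leader_cost R cl \<sigma> \<nu>) \<and>
     (\<forall>\<sigma>'. leader_strategy R \<sigma>' \<longrightarrow>
        (\<exists>\<nu>'. follower_NE R n cf \<sigma>' \<nu>' \<and> leader_cost R cl \<sigma> \<nu> \<le> leader_cost R cl \<sigma>' \<nu>'))"

end

theory Submission
  imports Defs
begin

text \<open>For a pure leader strategy the followers' equilibrium condition is literally the
  congestion-game condition for the followers, so only the leader's deviation needs an argument.
  If the leader switches to \<open>j\<close>, optimality (OSE) or pessimistic optimality (PSE) yields a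
  follower equilibrium \<open>\<nu>'\<close> for the pure strategy \<open>j\<close> whose leader cost \<open>c j (\<nu>' j + 1)\<close> is at least
  \<open>c istar (\<nu> istar + 1)\<close>. It remains to see \<open>c j (\<nu>' j + 1) \<le> c j (\<nu> j + 1)\<close>: this is monotonicity
  if \<open>\<nu>' j \<le> \<nu> j\<close>; otherwise some resource \<open>k \<noteq> j\<close> lost followers, and the equilibrium conditions
  of \<open>\<nu>'\<close> at \<open>j\<close> and of \<open>\<nu>\<close> at \<open>k\<close> chain through monotonicity of \<open>c k\<close>.\<close>

lemma exp_follower_cost_pure_strategy:
  "exp_follower_cost c (pure_strategy a) i x = real_of_rat (c i (x + of_bool (i = a)))"
  by (simp add: exp_follower_cost_def pure_strategy_def)

lemma leader_cost_pure_strategy: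
  assumes "finite R" "a \<in> R"
  shows "leader_cost R c (pure_strategy a) \<nu> = real_of_rat (c a (\<nu> a + 1))"
proof -
  have "leader_cost R c (pure_strategy a) \<nu> =
      (\<Sum>i\<in>R. if i = a then real_of_rat (c i (\<nu> i + 1)) else 0)"
    unfolding leader_cost_def pure_strategy_def by (rule sum.cong) auto
  with assms show ?thesis by (simp add: sum.delta)
qed

lemma leader_strategy_pure_strategy:
  "finite R \<Longrightarrow> a \<in> R \<Longrightarrow> leader_strategy R (pure_strategy a)"
  by (auto simp: leader_strategy_def pure_strategy_def sum.delta)

lemma leader_strategy_finite_nonempty:
  assumes "leader_strategy R \<sigma>"
  shows "finite R" "R \<noteq> {}"
  using assms by (auto simp: leader_strategy_def intro: ccontr)

lemma leader_strategy_le_one: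
  assumes "leader_strategy R \<sigma>"
  shows "\<sigma> i \<le> 1"
proof (cases "i \<in> R")
  case True
  have "\<sigma> i \<le> (\<Sum>k\<in>R. \<sigma> k)"
    using assms True leader_strategy_finite_nonempty(1)[OF assms]
    by (intro member_le_sum) (auto simp: leader_strategy_def)
  then show ?thesis using assms by (simp add: leader_strategy_def)
next
  case False
  then show ?thesis using assms by (simp add: leader_strategy_def)
qed

lemma follower_NE_pure_strategyD:
  assumes "follower_NE R n c (pure_strategy a) \<nu>"
    and "i \<in> R" "0 < \<nu> i" "j \<in> R" "j \<noteq> i"
  shows "c i (\<nu> i + of_bool (i = a)) \<le> c j (\<nu> j + of_bool (j = a) + 1)"
  using assms unfolding follower_NE_def exp_follower_cost_pure_strategy
  by (auto simp: of_rat_less_eq ac_simps)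

text \<open>Followers arrive one at a time, each joining a resource of least marginal cost;
  monotonicity keeps the earlier followers content.\<close>

lemma greedy_equilibrium_exists:
  fixes d :: "'r \<Rightarrow> nat \<Rightarrow> real"
  assumes fin: "finite R" and ne: "R \<noteq> {}" and mono: "\<forall>i\<in>R. \<forall>x. d i x \<le> d i (x + 1)"
  shows "\<exists>\<nu>. followers_config R n \<nu> \<and>
     (\<forall>i\<in>R. 0 < \<nu> i \<longrightarrow> (\<forall>k\<in>R. k \<noteq> i \<longrightarrow> d i (\<nu> i) \<le> d k (\<nu> k + 1)))"
proof (induction n)
  case 0
  show ?case by (rule exI[of _ "\<lambda>_. 0"]) (simp add: followers_config_def)
next
  case (Suc n)
  then obtain \<nu> where cfg: "followers_config R n \<nu>"
    and eqm: "\<forall>i\<in>R. 0 < \<nu> i \<longrightarrow> (\<forall>k\<in>R. k \<noteq> i \<longrightarrow> d i (\<nu> i) \<le> d k (\<nu> k + 1))" by blast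
  obtain r where r: "r \<in> R" and rmin: "\<forall>k\<in>R. d r (\<nu> r + 1) \<le> d k (\<nu> k + 1)"
    using arg_min_if_finite[OF fin ne, of "\<lambda>k. d k (\<nu> k + 1)"] by (metis not_less)
  define \<nu>' where "\<nu>' = (\<lambda>i. \<nu> i + of_bool (i = r))"
  have "followers_config R (Suc n) \<nu>'"
    using cfg fin r by (auto simp: followers_config_def \<nu>'_def sum.distrib)
  moreover have "d i (\<nu>' i) \<le> d k (\<nu>' k + 1)"
    if i: "i \<in> R" "0 < \<nu>' i" and k: "k \<in> R" "k \<noteq> i" for i k
  proof (cases "i = r")
    case True
    then show ?thesis using rmin k by (simp add: \<nu>'_def)
  next
    case False
    then have "0 < \<nu> i" "d i (\<nu> i) \<le> d k (\<nu> k + 1)"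
      using i k eqm by (auto simp: \<nu>'_def)
    moreover have "d k (\<nu> k + 1) \<le> d k (\<nu>' k + 1)"
      using mono k by (auto simp: \<nu>'_def)
    ultimately show ?thesis using False by (simp add: \<nu>'_def)
  qed
  ultimately show ?case by blast
qed

lemma follower_NE_exists:
  assumes \<sigma>: "leader_strategy R \<sigma>" and mono: "\<forall>i\<in>R. \<forall>x. cf i x \<le> cf i (x + 1)"
  shows "\<exists>\<nu>. follower_NE R n cf \<sigma> \<nu>"
proof -
  have "exp_follower_cost cf \<sigma> i x \<le> exp_follower_cost cf \<sigma> i (x + 1)" if "i \<in> R" for i x
  proof -
    have "real_of_rat (cf i x) \<le> real_of_rat (cf i (x + 1))"
      "real_of_rat (cf i (x + 1)) \<le> real_of_rat (cf i (x + 2))"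
      using mono that by (auto simp: of_rat_less_eq numeral_2_eq_2)
    moreover have "0 \<le> \<sigma> i"
      using \<sigma> by (simp add: leader_strategy_def)
    moreover have "\<sigma> i \<le> 1"
      by (rule leader_strategy_le_one[OF \<sigma>])
    ultimately show ?thesis
      unfolding exp_follower_cost_def
      by (simp add: add_mono mult_left_mono numeral_2_eq_2)
  qed
  then show ?thesis
    using greedy_equilibrium_exists[OF leader_strategy_finite_nonempty[OF \<sigma>]]
    by (simp add: follower_NE_def)
qed

lemma stackelberg_leader_cost_le:
  assumes "OSE R n cl cf \<sigma> \<nu> \<or> PSE R n cl cf \<sigma> \<nu>"
    and "\<forall>i\<in>R. \<forall>x. cf i x \<le> cf i (x + 1)" and "leader_strategy R \<sigma>'"
  shows "\<exists>\<nu>'. follower_NE R n cf \<sigma>' \<nu>' \<and> leader_cost R cl \<sigma> \<nu> \<le> leader_cost R cl \<sigma>' \<nu>'"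
  using assms(1,3) follower_NE_exists[OF assms(3,2), of n] unfolding OSE_def PSE_def by blast

lemma sum_eq_exists_less:
  fixes f g :: "'a \<Rightarrow> nat"
  assumes "finite R" "sum f R = sum g R" "j \<in> R" "f j < g j"
  shows "\<exists>k\<in>R - {j}. g k < f k"
proof (rule ccontr)
  assume "\<not> ?thesis"
  then have "sum f (R - {j}) \<le> sum g (R - {j})" by (auto intro: sum_mono simp: not_less)
  with assms show False by (simp add: sum.remove)
qed

lemma follower_NE_pure_strategy_deviation_le:
  assumes mono: "\<forall>i\<in>R. \<forall>x. c i x \<le> c i (x + 1)" and fin: "finite R"
    and NE: "follower_NE R n c (pure_strategy a) \<nu>"
    and NE': "follower_NE R n c (pure_strategy b) \<nu>'"
    and b: "b \<in> R" "b \<noteq> a"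
  shows "c b (\<nu>' b + 1) \<le> c b (\<nu> b + 1)"
proof -
  have mono_on: "mono (c i)" if "i \<in> R" for i
    using mono that by (simp add: mono_iff_le_Suc)
  show ?thesis
  proof (cases "\<nu>' b \<le> \<nu> b")
    case True
    then show ?thesis using mono_on[OF b(1)] by (simp add: monoD)
  next
    case False
    have "sum \<nu> R = sum \<nu>' R"
      using NE NE' by (simp add: follower_NE_def followers_config_def)
    then obtain k where k: "k \<in> R" "k \<noteq> b" "\<nu>' k < \<nu> k"
      using sum_eq_exists_less[OF fin _ b(1), of \<nu> \<nu>'] False by auto
    have "c b (\<nu>' b + 1) \<le> c k (\<nu>' k + 1)"
      using follower_NE_pure_strategyD[OF NE' b(1) _ k(1,2)] False k(2) by simp
    also have "\<dots> \<le> c k (\<nu> k + of_bool (k = a))"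
      using mono_on[OF k(1)] k(3) by (simp add: monoD)
    also have "\<dots> \<le> c b (\<nu> b + 1)"
      using follower_NE_pure_strategyD[OF NE k(1) _ b(1)] k b by simp
    finally show ?thesis .
  qed
qed

theorem theorem10:
  fixes R :: "'r set" and n :: nat and c :: "'r \<Rightarrow> nat \<Rightarrow> rat"
    and \<sigma> :: "'r \<Rightarrow> real" and \<nu> :: "'r \<Rightarrow> nat" and istar :: 'r
  assumes finR: "finite R"
    and zero: "\<forall>i\<in>R. c i 0 = 0"
    and mono: "\<forall>i\<in>R. \<forall>x. c i x \<le> c i (x + 1)"
    and eq: "OSE R n c c \<sigma> \<nu> \<or> PSE R n c c \<sigma> \<nu>"
    and istar: "istar \<in> R"
    and pure: "\<sigma> = pure_strategy istar"
  shows "(\<forall>i\<in>R. i \<noteq> istar \<and> 0 < \<nu> i \<longrightarrow> (\<forall>j\<in>R. j \<noteq> i \<longrightarrow>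
            c i (\<nu> i + of_bool (i = istar)) \<le> c j (\<nu> j + of_bool (j = istar) + 1)))
       \<and> (0 < \<nu> istar \<longrightarrow> (\<forall>j\<in>R. j \<noteq> istar \<longrightarrow> c istar (\<nu> istar + 1) \<le> c j (\<nu> j + 1)))
       \<and> (\<forall>j\<in>R. j \<noteq> istar \<longrightarrow> c istar (\<nu> istar + 1) \<le> c j (\<nu> j + 1))"
proof -
  have NE: "follower_NE R n c (pure_strategy istar) \<nu>"
    using eq pure by (auto simp: OSE_def PSE_def)
  have leader: "c istar (\<nu> istar + 1) \<le> c j (\<nu> j + 1)" if j: "j \<in> R" "j \<noteq> istar" for j
  proof -
    obtain \<nu>' where NE': "follower_NE R n c (pure_strategy j) \<nu>'"
      and le: "leader_cost R c \<sigma> \<nu> \<le> leader_cost R c (pure_strategy j) \<nu>'"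
      using stackelberg_leader_cost_le[OF eq mono leader_strategy_pure_strategy[OF finR j(1)]]
      by blast
    have "c istar (\<nu> istar + 1) \<le> c j (\<nu>' j + 1)"
      using le by (simp add: pure leader_cost_pure_strategy finR istar j of_rat_less_eq)
    also have "\<dots> \<le> c j (\<nu> j + 1)"
      using follower_NE_pure_strategy_deviation_le[OF mono finR NE NE' j] .
    finally show ?thesis .
  qed
  show ?thesis
    using follower_NE_pure_strategyD[OF NE] istar leader by fastforce
qed

end
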